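(* Let $n\ge 2$ and let $V\subset\mathbb{R}^n$ be a finite set containing no two parallel vectors. Let $T\subset\mathbb{R}^n$ be a closed set which is $V$-closed, and let $C=\operatorname{cl}\operatorname{conv} T$ be the closure of the convex hull of $T$. If $x$ is an extreme point of $C$, then there is a vector $t\in\mathbb{R}^n$ such that $x\in t+P(V)\subset C$.
   Context: For a finite set $V\subset\mathbb{R}^n$, a set $T\subset\mathbb{R}^n$ is called $V$-closed if for every $t\in T$ and every $v\in V$, at least one of $t+v$ and $t-v$ lies in $T$. The set $P(V)$ is $P(V)=\{\sum_{v\in W} v : W\subseteq V\}$ (the set of all subset sums of $V$). A point $x$ of a convex set $C$ is an extreme point if there are no two distinct points $x_0,x_1\in C$ with $x$ in the open segment between them. *)

theory Defs
  imports "HOL-Analysis.Analysis"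
begin

definition V_closed :: "('a::real_vector) set \<Rightarrow> 'a set \<Rightarrow> bool" where
  "V_closed V T \<longleftrightarrow> (\<forall>t\<in>T. \<forall>v\<in>V. t + v \<in> T \<or> t - v \<in> T)"

definition subset_sums :: "('a::real_vector) set \<Rightarrow> 'a set" where
  "subset_sums V = {\<Sum>v\<in>W. v | W. W \<subseteq> V}"

definition parallel :: "('a::real_vector) \<Rightarrow> 'a \<Rightarrow> bool" where
  "parallel u v \<longleftrightarrow> (\<exists>c::real. u = c *\<^sub>R v \<or> v = c *\<^sub>R u)"

end

theory Submission
  imports Defs
begin

text \<open>
  An extreme point x of C = cl conv T can be cut off from C by slices {y \<in> C. c < f y} of
  arbitrarily small diameter, stably under small perturbations of f; as T is closed, x \<in> T.
  Choose signs d v = \<plusminus>v with x + d v \<in> T and fix a linear functional g. Follow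
  almost-maximisers of f + \<tau> g on T as \<tau> increases from 0, where f slices off x and is
  generic, so that the breakpoints at which f + \<tau> g changes sign on the vectors d v are distinct.
  Whenever \<tau> crosses the breakpoint of a d v with g (d v) > 0, V-closedness forces the
  maximiser to move by d v. Hence sup g over T is at least g x plus all positive g (d v), and by
  separation x + (\<Sum>v\<in>W. d v) \<in> C for every W \<subseteq> V. Then t = x - \<Sum>{v \<in> V. x + v \<notin> T} works.
\<close>

lemma finite_pos_lower_bound:
  fixes P :: "'i \<Rightarrow> real"
  assumes "finite I" "\<And>i. i \<in> I \<Longrightarrow> 0 < P i" "0 < a"
  shows "\<exists>e>0. e < a \<and> (\<forall>i\<in>I. e < P i)"
proof -
  let ?m = "Min (insert a (P ` I))"
  have "0 < ?m" using assms by (subst Min_gr_iff) auto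
  moreover have "?m \<le> a" "\<forall>i\<in>I. ?m \<le> P i" using assms by auto
  ultimately show ?thesis by (intro exI[of _ "?m / 2"]) auto
qed

lemma parallel_commute: "parallel u v \<longleftrightarrow> parallel v u"
  unfolding parallel_def by blast

lemma parallel_uminus_left [simp]: "parallel (- u) v \<longleftrightarrow> parallel u v"
  unfolding parallel_def by (metis minus_minus scaleR_minus_left scaleR_minus_right)

lemma parallel_uminus_right [simp]: "parallel u (- v) \<longleftrightarrow> parallel u v"
  using parallel_uminus_left parallel_commute by metis

lemma sum_diff_sum_eq_sum_symdiff:
  fixes W N :: "'a::ab_group_add set"
  assumes "finite W" "finite N"
  shows "(\<Sum>v\<in>W. v) - (\<Sum>v\<in>N. v) = (\<Sum>v\<in>(W - N) \<union> (N - W). if v \<in> N then - v else v)"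
proof -
  have "(\<Sum>v\<in>(W - N) \<union> (N - W). if v \<in> N then - v else v) = (\<Sum>v\<in>W - N. v) - (\<Sum>v\<in>N - W. v)"
    using assms by (subst sum.union_disjoint) (auto simp: sum_negf)
  moreover have "(\<Sum>v\<in>W. v) = (\<Sum>v\<in>W - N. v) + (\<Sum>v\<in>W \<inter> N. v)"
    "(\<Sum>v\<in>N. v) = (\<Sum>v\<in>N - W. v) + (\<Sum>v\<in>W \<inter> N. v)"
    using assms by (metis Int_commute add.commute sum.Int_Diff)+
  ultimately show ?thesis by (simp add: algebra_simps)
qed

lemma convex_superlevel_in_ball:
  fixes C :: "'a::real_inner set"
  assumes "convex C" "x \<in> C" "0 < r" "c < inner f x"
    and sphere: "\<And>y. y \<in> C \<Longrightarrow> dist y x = r \<Longrightarrow> inner f y < c"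
    and "y \<in> C" "c < inner f y"
  shows "dist y x < r"
proof (rule ccontr)
  assume "\<not> dist y x < r"
  define s where "s = r / dist y x"
  have "0 < dist y x" using \<open>\<not> dist y x < r\<close> \<open>0 < r\<close> by linarith
  with \<open>\<not> dist y x < r\<close> \<open>0 < r\<close> have "0 < s" "s \<le> 1" by (simp_all add: s_def)
  define z where "z = (1 - s) *\<^sub>R x + s *\<^sub>R y"
  have "z \<in> C" using assms \<open>0 < s\<close> \<open>s \<le> 1\<close> unfolding z_def by (intro convexD) auto
  moreover have "dist z x = r"
  proof -
    have "z - x = s *\<^sub>R (y - x)" by (simp add: z_def algebra_simps)
    then show ?thesis using \<open>0 < r\<close> \<open>0 < dist y x\<close> by (simp add: dist_norm s_def)
  qed
  moreover have "c \<le> inner f z"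
  proof -
    have "(1 - s) * c \<le> (1 - s) * inner f x" "s * c \<le> s * inner f y"
      using assms \<open>0 < s\<close> \<open>s \<le> 1\<close> by (simp_all add: mult_left_mono)
    then show ?thesis by (simp add: z_def inner_add_right algebra_simps)
  qed
  ultimately show False using sphere by fastforce
qed

lemma inner_le_add_norm_mult_dist:
  fixes f :: "'a::real_inner"
  assumes "dist y x \<le> r"
  shows "inner f y \<le> inner f x + norm f * r"
proof -
  have "inner f (y - x) \<le> norm f * r"
    using norm_cauchy_schwarz[of f "y - x"] mult_left_mono[of "norm (y - x)" r "norm f"] assms
    by (simp add: dist_norm)
  then show ?thesis by (simp add: inner_diff_right)
qed

lemma strict_separation_stable:
  fixes K :: "'a::real_inner set"
  assumes "bounded K" and sep: "\<forall>y\<in>K. inner a y < b" "b < inner a x"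
  shows "\<exists>\<delta>>0. \<forall>f\<in>ball a \<delta>. \<exists>c. c < inner f x \<and> (\<forall>y\<in>K. inner f y < c)"
proof -
  have "bounded (insert x K)" using assms(1) by simp
  then obtain \<rho> where "0 < \<rho>" and \<rho>: "\<forall>y\<in>insert x K. norm y \<le> \<rho>"
    by (meson bounded_pos)
  define \<delta> where "\<delta> = (inner a x - b) / (2 * \<rho>)"
  have "\<exists>c. c < inner f x \<and> (\<forall>y\<in>K. inner f y < c)" if "f \<in> ball a \<delta>" for f
  proof -
    define e where "e = f - a"
    have "2 * (norm e * \<rho>) < inner a x - b"
      using that \<open>0 < \<rho>\<close> by (simp add: e_def \<delta>_def dist_norm field_simps norm_minus_commute)
    have e_bound: "\<bar>inner e y\<bar> \<le> norm e * \<rho>" if "y \<in> insert x K" for y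
    proof -
      have "\<bar>inner e y\<bar> \<le> norm e * norm y" by (rule Cauchy_Schwarz_ineq2)
      also have "\<dots> \<le> norm e * \<rho>" using \<rho> that by (intro mult_left_mono) auto
      finally show ?thesis .
    qed
    have f_eq: "inner f y = inner a y + inner e y" for y by (simp add: e_def inner_diff_left)
    show ?thesis
    proof (intro exI conjI ballI)
      have "- (norm e * \<rho>) \<le> inner e x" using e_bound[of x] by (simp add: abs_le_iff)
      with f_eq[of x] \<open>2 * (norm e * \<rho>) < inner a x - b\<close> show "b + norm e * \<rho> < inner f x"
        by linarith
      fix y assume "y \<in> K"
      then have "inner e y \<le> norm e * \<rho>" using e_bound[of y] by (simp add: abs_le_iff)
      moreover have "inner a y < b" using sep(1) \<open>y \<in> K\<close> by blast
      ultimately show "inner f y < b + norm e * \<rho>" using f_eq[of y] by linarith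
    qed
  qed
  moreover have "0 < \<delta>" using sep(2) \<open>0 < \<rho>\<close> by (simp add: \<delta>_def)
  ultimately show ?thesis by blast
qed

lemma extreme_point_stable_slices:
  fixes C :: "'a::euclidean_space set"
  assumes "closed C" "convex C" "x extreme_point_of C" "0 < r"
  shows "\<exists>U. open U \<and> U \<noteq> {} \<and>
           (\<forall>f\<in>U. \<exists>c. c < inner f x \<and> (\<forall>y\<in>C. c < inner f y \<longrightarrow> dist y x < r))"
proof -
  define K where "K = convex hull (C \<inter> sphere x r)"
  have "compact K" unfolding K_def
    using assms by (intro compact_convex_hull closed_Int_compact) auto
  have "x \<notin> K"
  proof
    assume "x \<in> K"
    moreover have "K \<subseteq> C" unfolding K_def using assms(2) by (intro hull_minimal) auto
    ultimately have "x extreme_point_of K"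
      using assms(3) unfolding extreme_point_of_def by blast
    then have "x \<in> C \<inter> sphere x r" unfolding K_def by (rule extreme_point_of_convex_hull)
    with \<open>0 < r\<close> show False by simp
  qed
  then obtain a b where "inner a x < b" "\<forall>y\<in>K. b < inner a y"
    using separating_hyperplane_closed_point[of K x] \<open>compact K\<close>
      convex_convex_hull compact_imp_closed unfolding K_def by metis
  then have "\<forall>y\<in>K. inner (- a) y < - b" "- b < inner (- a) x" by auto
  from strict_separation_stable[OF compact_imp_bounded[OF \<open>compact K\<close>] this]
  obtain \<delta> where "0 < \<delta>" and \<delta>: "\<forall>f\<in>ball (- a) \<delta>. \<exists>c. c < inner f x \<and> (\<forall>y\<in>K. inner f y < c)"
    by blast
  have "\<exists>c. c < inner f x \<and> (\<forall>y\<in>C. c < inner f y \<longrightarrow> dist y x < r)" if "f \<in> ball (- a) \<delta>" for f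
  proof -
    from bspec[OF \<delta> that] obtain c where "c < inner f x" and c: "\<forall>y\<in>K. inner f y < c"
      by blast
    have sphere: "inner f y < c" if "y \<in> C" "dist y x = r" for y
    proof -
      have "y \<in> K" using that hull_subset[of "C \<inter> sphere x r" convex] by (auto simp: K_def dist_commute)
      with c show ?thesis by blast
    qed
    have "x \<in> C" using assms(3) by (simp add: extreme_point_of_def)
    have "\<forall>y\<in>C. c < inner f y \<longrightarrow> dist y x < r"
      using convex_superlevel_in_ball[OF assms(2) \<open>x \<in> C\<close> \<open>0 < r\<close> \<open>c < inner f x\<close> sphere] by blast
    with \<open>c < inner f x\<close> show ?thesis by blast
  qed
  with \<open>0 < \<delta>\<close> show ?thesis by (intro exI[of _ "ball (- a) \<delta>"]) auto
qed

lemma interior_Union_hyperplanes: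
  fixes R :: "'a::euclidean_space set"
  assumes "finite R" "0 \<notin> R"
  shows "interior (\<Union>\<rho>\<in>R. {f. \<rho> \<bullet> f = 0}) = {}"
  using assms
proof (induction R rule: finite_induct)
  case (insert \<rho> R)
  have "interior ((\<Union>\<rho>\<in>R. {f. \<rho> \<bullet> f = 0}) \<union> {f. \<rho> \<bullet> f = 0}) = {}"
    using insert by (subst interior_closed_Un_empty_interior)
      (auto intro!: closed_UN closed_hyperplane)
  then show ?case by (simp add: Un_commute)
qed simp

lemma extreme_point_generic_slice:
  fixes C :: "'a::euclidean_space set"
  assumes "closed C" "convex C" "x extreme_point_of C" "0 < r" "finite R" "0 \<notin> R"
  shows "\<exists>f c. c < inner f x \<and> (\<forall>y\<in>C. c < inner f y \<longrightarrow> dist y x < r) \<and> (\<forall>\<rho>\<in>R. inner f \<rho> \<noteq> 0)"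
proof -
  obtain U where "open U" "U \<noteq> {}"
    and slices: "\<forall>f\<in>U. \<exists>c. c < inner f x \<and> (\<forall>y\<in>C. c < inner f y \<longrightarrow> dist y x < r)"
    using extreme_point_stable_slices[OF assms(1-4)] by blast
  have "\<not> U \<subseteq> (\<Union>\<rho>\<in>R. {f. \<rho> \<bullet> f = 0})"
    using interior_maximal[OF _ \<open>open U\<close>] interior_Union_hyperplanes[OF assms(5,6)] \<open>U \<noteq> {}\<close>
    by blast
  then obtain f where "f \<in> U" "\<forall>\<rho>\<in>R. inner f \<rho> \<noteq> 0" by (force simp: inner_commute)
  with slices show ?thesis by blast
qed

lemma extreme_point_closure_convex_hull_mem:
  fixes T :: "'a::euclidean_space set"
  assumes "closed T" "x extreme_point_of closure (convex hull T)"
  shows "x \<in> T"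
proof (rule ccontr)
  assume "x \<notin> T"
  then obtain r where "0 < r" and r: "\<forall>y. dist y x < r \<longrightarrow> y \<notin> T"
    using assms(1) unfolding closed_def open_dist by (metis ComplD ComplI)
  obtain f c where "c < inner f x" and slice: "\<forall>y\<in>closure (convex hull T). c < inner f y \<longrightarrow> dist y x < r"
    using extreme_point_generic_slice[OF _ _ assms(2) \<open>0 < r\<close> finite.emptyI] by (auto simp: convex_closure)
  have "T \<subseteq> {y. inner f y \<le> c}"
    using slice r closure_subset hull_subset[of T convex] by fastforce
  then have "closure (convex hull T) \<subseteq> {y. inner f y \<le> c}"
    by (intro closure_minimal hull_minimal) (auto simp: closed_halfspace_le convex_halfspace_le)
  with assms(2) \<open>c < inner f x\<close> show False by (auto simp: extreme_point_of_def)
qed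

definition almost_argmax :: "('a \<Rightarrow> real) \<Rightarrow> real \<Rightarrow> 'a set \<Rightarrow> 'a \<Rightarrow> bool" where
  "almost_argmax h \<gamma> T t \<longleftrightarrow> t \<in> T \<and> (\<forall>s\<in>T. h s \<le> h t + \<gamma>)"

lemma almost_argmax_exists:
  fixes h :: "'a \<Rightarrow> real"
  assumes "\<And>t. t \<in> T \<Longrightarrow> h t \<le> B" "T \<noteq> {}" "0 < \<gamma>"
  shows "\<exists>t. almost_argmax h \<gamma> T t"
proof -
  have bdd: "bdd_above (h ` T)" using assms(1) by (rule bdd_above.I2)
  have "(SUP s\<in>T. h s) - \<gamma> < (SUP s\<in>T. h s)" using assms(3) by simp
  then obtain t where "t \<in> T" "(SUP s\<in>T. h s) - \<gamma> < h t"
    using less_cSUP_iff[OF assms(2) bdd] by blast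
  moreover have "h s \<le> (SUP s\<in>T. h s)" if "s \<in> T" for s using bdd that by (simp add: cSUP_upper)
  ultimately show ?thesis unfolding almost_argmax_def by force
qed

lemma almost_argmax_nonneg: "almost_argmax h \<gamma> T t \<Longrightarrow> 0 \<le> \<gamma>"
  unfolding almost_argmax_def by fastforce

definition breakpoint :: "'a::real_inner \<Rightarrow> 'a \<Rightarrow> 'a \<Rightarrow> real" where
  "breakpoint f g d = - inner f d / inner g d"

lemma inner_breakpoint:
  "inner g d \<noteq> 0 \<Longrightarrow> inner (f + \<tau> *\<^sub>R g) d = inner g d * (\<tau> - breakpoint f g d)"
  by (simp add: breakpoint_def inner_add_left field_simps)

(* Below the breakpoint of d the move t - d costs more than \<gamma>, so t + d \<in> T; above it the
   move t1 + d gains more than \<gamma>', so t1 - d \<in> T. Compare t1 - d with t and t + d with t1. *)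
lemma almost_argmax_cross:
  fixes f g d :: "'a::real_inner"
  assumes moves: "\<And>t. t \<in> T \<Longrightarrow> t + d \<in> T \<or> t - d \<in> T"
    and t: "almost_argmax (inner (f + \<tau> *\<^sub>R g)) \<gamma> T t"
    and t1: "almost_argmax (inner (f + \<tau>' *\<^sub>R g)) \<gamma>' T t1"
    and below: "\<gamma> < - inner (f + \<tau> *\<^sub>R g) d"
    and above: "\<gamma>' < inner (f + \<tau>' *\<^sub>R g) d"
    and "\<tau> < \<tau>'"
  shows "inner g t + inner g d - (\<gamma> + \<gamma>') / (\<tau>' - \<tau>) \<le> inner g t1"
proof -
  have "t + d \<in> T"
  proof (rule ccontr)
    assume "t + d \<notin> T"
    then have "inner (f + \<tau> *\<^sub>R g) (t - d) \<le> inner (f + \<tau> *\<^sub>R g) t + \<gamma>"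
      using moves t unfolding almost_argmax_def by blast
    with below show False by (simp add: inner_diff_right)
  qed
  moreover have "t1 - d \<in> T"
  proof (rule ccontr)
    assume "t1 - d \<notin> T"
    then have "inner (f + \<tau>' *\<^sub>R g) (t1 + d) \<le> inner (f + \<tau>' *\<^sub>R g) t1 + \<gamma>'"
      using moves t1 unfolding almost_argmax_def by blast
    with above show False by (simp add: inner_add_right)
  qed
  ultimately have "inner (f + \<tau> *\<^sub>R g) (t1 - d) \<le> inner (f + \<tau> *\<^sub>R g) t + \<gamma>"
    "inner (f + \<tau>' *\<^sub>R g) (t + d) \<le> inner (f + \<tau>' *\<^sub>R g) t1 + \<gamma>'"
    using t t1 unfolding almost_argmax_def by blast+
  then have "(\<tau>' - \<tau>) * (inner g t + inner g d - inner g t1) \<le> \<gamma> + \<gamma>'"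
    by (simp add: inner_add_left inner_add_right inner_diff_right algebra_simps)
  with \<open>\<tau> < \<tau>'\<close> show ?thesis by (simp add: field_simps)
qed

(* inner g t - \<gamma> / \<delta> serves as a potential; \<tau>' is placed just above the first breakpoint
   and below all the others. *)
lemma almost_argmax_cross_first_breakpoint:
  fixes f g :: "'a::real_inner" and d :: "'i \<Rightarrow> 'a"
  assumes "finite S"
    and moves: "\<And>t. t \<in> T \<Longrightarrow> t + d x \<in> T \<or> t - d x \<in> T"
    and f_bdd: "\<And>t. t \<in> T \<Longrightarrow> inner f t \<le> Bf"
    and g_bdd: "\<And>t. t \<in> T \<Longrightarrow> inner g t \<le> Bg"
    and g_pos: "\<And>i. i \<in> insert x S \<Longrightarrow> 0 < inner g (d i)"
    and first: "\<And>y. y \<in> S \<Longrightarrow> breakpoint f g (d x) < breakpoint f g (d y)"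
    and "0 \<le> \<tau>" "0 < \<delta>"
    and gap: "\<tau> + \<delta> \<le> breakpoint f g (d x)"
    and below: "\<gamma> < - inner (f + \<tau> *\<^sub>R g) (d x)"
    and t: "almost_argmax (inner (f + \<tau> *\<^sub>R g)) \<gamma> T t"
    and "0 < \<epsilon>"
  obtains \<tau>' \<delta>' \<gamma>' t' where "0 \<le> \<tau>'" "0 < \<delta>'"
    "\<And>y. y \<in> S \<Longrightarrow> \<tau>' + \<delta>' \<le> breakpoint f g (d y)"
    "\<And>y. y \<in> S \<Longrightarrow> \<gamma>' < - inner (f + \<tau>' *\<^sub>R g) (d y)"
    "almost_argmax (inner (f + \<tau>' *\<^sub>R g)) \<gamma>' T t'"
    "inner g t - \<gamma> / \<delta> + inner g (d x) - \<epsilon> \<le> inner g t' - \<gamma>' / \<delta>'"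
proof -
  define \<mu> where "\<mu> i = breakpoint f g (d i)" for i
  obtain e where "0 < e" and e: "\<forall>y\<in>S. e < \<mu> y - \<mu> x"
    using finite_pos_lower_bound[OF \<open>finite S\<close>, of "\<lambda>y. \<mu> y - \<mu> x" 1] first by (auto simp: \<mu>_def)
  define s where "s = e / 2"
  define \<tau>' where "\<tau>' = \<mu> x + s"
  have "0 < s" using \<open>0 < e\<close> by (simp add: s_def)
  have "\<tau> < \<tau>'" "\<delta> < \<tau>' - \<tau>" using gap \<open>0 < s\<close> \<open>0 < \<delta>\<close> by (simp_all add: \<tau>'_def \<mu>_def)
  have gap_S: "\<tau>' + s \<le> \<mu> y" if "y \<in> S" for y
    using e that by (fastforce simp: \<tau>'_def s_def)
  have below_S: "0 < - inner (f + \<tau>' *\<^sub>R g) (d y)" if "y \<in> S" for y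
    using g_pos[of y] gap_S[OF that] \<open>0 < s\<close> that by (simp add: inner_breakpoint mult_pos_neg \<mu>_def)
  have "0 < \<epsilon> / (1 / \<delta> + 1 / s)" using \<open>0 < \<epsilon>\<close> \<open>0 < \<delta>\<close> \<open>0 < s\<close> by (simp add: add_pos_pos)
  then have "0 < min (\<epsilon> / (1 / \<delta> + 1 / s)) (inner g (d x) * s)" using g_pos[of x] \<open>0 < s\<close> by simp
  then obtain \<gamma>' where "0 < \<gamma>'" and "\<gamma>' < min (\<epsilon> / (1 / \<delta> + 1 / s)) (inner g (d x) * s)"
    and \<gamma>'_S: "\<forall>y\<in>S. \<gamma>' < - inner (f + \<tau>' *\<^sub>R g) (d y)"
    using finite_pos_lower_bound[OF \<open>finite S\<close>, of "\<lambda>y. - inner (f + \<tau>' *\<^sub>R g) (d y)"] below_S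
    by blast
  then have \<gamma>'_small: "\<gamma>' / \<delta> + \<gamma>' / s \<le> \<epsilon>" using \<open>0 < \<delta>\<close> \<open>0 < s\<close> by (simp add: field_simps)
  have "inner (f + \<tau>' *\<^sub>R g) (d x) = inner g (d x) * s"
    using g_pos[of x] by (simp add: inner_breakpoint \<tau>'_def \<mu>_def)
  with \<open>\<gamma>' < min _ _\<close> have above: "\<gamma>' < inner (f + \<tau>' *\<^sub>R g) (d x)" by simp
  have "0 \<le> \<tau>'" using \<open>0 \<le> \<tau>\<close> \<open>\<tau> < \<tau>'\<close> by simp
  then have "inner (f + \<tau>' *\<^sub>R g) u \<le> Bf + \<tau>' * Bg" if "u \<in> T" for u
    using f_bdd[OF that] g_bdd[OF that] by (simp add: inner_add_left add_mono mult_left_mono)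
  moreover have "T \<noteq> {}" using t by (auto simp: almost_argmax_def)
  ultimately obtain t' where t': "almost_argmax (inner (f + \<tau>' *\<^sub>R g)) \<gamma>' T t'"
    using almost_argmax_exists \<open>0 < \<gamma>'\<close> by blast
  have "inner g t + inner g (d x) - (\<gamma> + \<gamma>') / (\<tau>' - \<tau>) \<le> inner g t'"
    using almost_argmax_cross[OF moves t t' below above \<open>\<tau> < \<tau>'\<close>] .
  moreover have "(\<gamma> + \<gamma>') / (\<tau>' - \<tau>) \<le> (\<gamma> + \<gamma>') / \<delta>"
    using almost_argmax_nonneg[OF t] \<open>0 < \<gamma>'\<close> \<open>0 < \<delta>\<close> \<open>\<delta> < \<tau>' - \<tau>\<close> by (intro divide_left_mono) auto
  ultimately have "inner g t - \<gamma> / \<delta> + inner g (d x) - \<epsilon> \<le> inner g t' - \<gamma>' / s"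
    using \<gamma>'_small unfolding add_divide_distrib by linarith
  with \<open>0 \<le> \<tau>'\<close> \<open>0 < s\<close> gap_S \<gamma>'_S t' show thesis by (intro that) (auto simp: \<mu>_def)
qed

lemma parametric_ascent:
  fixes f g :: "'a::real_inner" and d :: "'i \<Rightarrow> 'a"
  assumes "finite I"
    and moves: "\<And>t i. t \<in> T \<Longrightarrow> i \<in> I \<Longrightarrow> t + d i \<in> T \<or> t - d i \<in> T"
    and f_bdd: "\<And>t. t \<in> T \<Longrightarrow> inner f t \<le> Bf"
    and g_bdd: "\<And>t. t \<in> T \<Longrightarrow> inner g t \<le> Bg"
    and g_pos: "\<And>i. i \<in> I \<Longrightarrow> 0 < inner g (d i)"
    and distinct: "inj_on (\<lambda>i. breakpoint f g (d i)) I"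
    and "0 \<le> \<tau>" "0 < \<delta>"
    and gap: "\<And>i. i \<in> I \<Longrightarrow> \<tau> + \<delta> \<le> breakpoint f g (d i)"
    and below: "\<And>i. i \<in> I \<Longrightarrow> \<gamma> < - inner (f + \<tau> *\<^sub>R g) (d i)"
    and t: "almost_argmax (inner (f + \<tau> *\<^sub>R g)) \<gamma> T t"
    and "0 < \<epsilon>"
  shows "\<exists>t'\<in>T. inner g t + (\<Sum>i\<in>I. inner g (d i)) - \<gamma> / \<delta> - \<epsilon> \<le> inner g t'"
  using \<open>finite I\<close> moves g_pos distinct assms(7-)
proof (induction I arbitrary: \<tau> \<delta> \<gamma> t \<epsilon> rule: finite_ranking_induct[where f = "\<lambda>i. - breakpoint f g (d i)"])
  case (empty \<tau> \<delta> \<gamma> t \<epsilon>)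
  have "0 \<le> \<gamma> / \<delta>" using almost_argmax_nonneg[OF empty.prems(8)] empty.prems(5) by simp
  with empty.prems(8,9) show ?case unfolding almost_argmax_def by force
next
  case (insert x S \<tau> \<delta> \<gamma> t \<epsilon>)
  show ?case
  proof (cases "x \<in> S")
    case True
    with insert show ?thesis by (simp add: insert_absorb)
  next
    case False
    have moves_x: "t + d x \<in> T \<or> t - d x \<in> T" if "t \<in> T" for t
      using insert.prems(1) that by blast
    have first: "breakpoint f g (d x) < breakpoint f g (d y)" if "y \<in> S" for y
      using insert.hyps(2)[OF that] insert.prems(3) False that unfolding inj_on_def by force
    have "0 < \<epsilon> / 2" using insert.prems(9) by simp
    then obtain \<tau>' \<delta>' \<gamma>' t' where "0 \<le> \<tau>'" "0 < \<delta>'"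
      "\<And>y. y \<in> S \<Longrightarrow> \<tau>' + \<delta>' \<le> breakpoint f g (d y)"
      "\<And>y. y \<in> S \<Longrightarrow> \<gamma>' < - inner (f + \<tau>' *\<^sub>R g) (d y)"
      and t': "almost_argmax (inner (f + \<tau>' *\<^sub>R g)) \<gamma>' T t'"
      and gain: "inner g t - \<gamma> / \<delta> + inner g (d x) - \<epsilon> / 2 \<le> inner g t' - \<gamma>' / \<delta>'"
      using almost_argmax_cross_first_breakpoint[where d = d and x = x, OF insert.hyps(1) moves_x
          f_bdd g_bdd insert.prems(2) first insert.prems(4,5) insert.prems(6,7)[OF insertI1]
          insert.prems(8)]
      by blast
    with insert.IH[of \<tau>' \<delta>' \<gamma>' t' "\<epsilon> / 2"] insert.prems(1-3) \<open>0 < \<epsilon> / 2\<close>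
    obtain t'' where "t'' \<in> T" "inner g t' + (\<Sum>i\<in>S. inner g (d i)) - \<gamma>' / \<delta>' - \<epsilon> / 2 \<le> inner g t''"
      by (auto simp: inj_on_insert)
    with gain False insert.hyps(1) show ?thesis by (intro bexI[of _ t'']) auto
  qed
qed

lemma extreme_point_tilted_functional:
  fixes T :: "'a::euclidean_space set" and d :: "'i \<Rightarrow> 'a"
  assumes ext: "x extreme_point_of closure (convex hull T)"
    and "finite I" "0 < r"
    and dirs: "\<And>i. i \<in> I \<Longrightarrow> x + d i \<in> T"
    and far: "\<And>i. i \<in> I \<Longrightarrow> r \<le> norm (d i)"
    and nonpar: "\<And>i j. i \<in> I \<Longrightarrow> j \<in> I \<Longrightarrow> i \<noteq> j \<Longrightarrow> \<not> parallel (d i) (d j)"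
    and g_pos: "\<And>i. i \<in> I \<Longrightarrow> 0 < inner g (d i)"
  shows "\<exists>f \<kappa>. 0 < \<kappa> \<and> (\<forall>t\<in>T. inner f x - \<kappa> < inner f t \<longrightarrow> dist t x < r)
            \<and> (\<forall>i\<in>I. inner f (d i) \<le> - \<kappa>) \<and> inj_on (\<lambda>i. breakpoint f g (d i)) I"
proof -
  define C where "C = closure (convex hull T)"
  have "T \<subseteq> C" using closure_subset hull_subset[of T convex] by (auto simp: C_def)
  \<comment> \<open>A functional orthogonal to no element of R separates all breakpoints.\<close>
  define R where "R = (\<lambda>(i, j). inner g (d j) *\<^sub>R d i - inner g (d i) *\<^sub>R d j) ` (I \<times> I - Id)"
  have "finite R" using \<open>finite I\<close> by (simp add: R_def)
  have "0 \<notin> R"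
  proof
    assume "0 \<in> R"
    then obtain i j where "i \<in> I" "j \<in> I" "i \<noteq> j"
      and eq: "inner g (d j) *\<^sub>R d i = inner g (d i) *\<^sub>R d j" unfolding R_def by force
    have "d i = inverse (inner g (d j)) *\<^sub>R (inner g (d j) *\<^sub>R d i)"
      using g_pos[OF \<open>j \<in> I\<close>] by simp
    then have "d i = (inner g (d i) / inner g (d j)) *\<^sub>R d j"
      unfolding eq by (simp add: divide_inverse mult.commute)
    with nonpar \<open>i \<in> I\<close> \<open>j \<in> I\<close> \<open>i \<noteq> j\<close> show False by (auto simp: parallel_def)
  qed
  obtain f c where "c < inner f x" and slice: "\<forall>y\<in>C. c < inner f y \<longrightarrow> dist y x < r"
    and generic: "\<forall>\<rho>\<in>R. inner f \<rho> \<noteq> 0"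
    using extreme_point_generic_slice[OF _ _ ext \<open>0 < r\<close> \<open>finite R\<close> \<open>0 \<notin> R\<close>]
    unfolding C_def by (auto simp: convex_closure)
  define \<kappa> where "\<kappa> = inner f x - c"
  have "inner f (d i) \<le> - \<kappa>" if "i \<in> I" for i
  proof -
    have "\<not> dist (x + d i) x < r" using far[OF that] by (simp add: dist_norm)
    then have "inner f (x + d i) \<le> c" using slice dirs[OF that] \<open>T \<subseteq> C\<close> by force
    then show ?thesis by (simp add: \<kappa>_def inner_add_right)
  qed
  moreover have "inj_on (\<lambda>i. breakpoint f g (d i)) I"
  proof (rule inj_onI, rule ccontr)
    fix i j assume "i \<in> I" "j \<in> I" "i \<noteq> j" "breakpoint f g (d i) = breakpoint f g (d j)"
    then have "inner f (inner g (d j) *\<^sub>R d i - inner g (d i) *\<^sub>R d j) = 0"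
      using g_pos[of i] g_pos[of j] by (simp add: breakpoint_def inner_diff_right field_simps)
    moreover have "inner g (d j) *\<^sub>R d i - inner g (d i) *\<^sub>R d j \<in> R"
      using \<open>i \<in> I\<close> \<open>j \<in> I\<close> \<open>i \<noteq> j\<close> unfolding R_def by force
    ultimately show False using generic by blast
  qed
  moreover have "0 < \<kappa>" using \<open>c < inner f x\<close> by (simp add: \<kappa>_def)
  moreover have "\<forall>t\<in>T. inner f x - \<kappa> < inner f t \<longrightarrow> dist t x < r"
    using slice \<open>T \<subseteq> C\<close> unfolding \<kappa>_def by auto
  ultimately show ?thesis by blast
qed

lemma slicing_functional_ascent:
  fixes T :: "'a::real_inner set" and d :: "'i \<Rightarrow> 'a"
  assumes "x \<in> T" "finite I"
    and moves: "\<And>t i. t \<in> T \<Longrightarrow> i \<in> I \<Longrightarrow> t + d i \<in> T \<or> t - d i \<in> T"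
    and g_pos: "\<And>i. i \<in> I \<Longrightarrow> 0 < inner g (d i)"
    and g_bdd: "\<And>t. t \<in> T \<Longrightarrow> inner g t \<le> B"
    and "0 < \<kappa>"
    and near: "\<And>t. t \<in> T \<Longrightarrow> inner f x - \<kappa> < inner f t \<Longrightarrow> dist t x \<le> r"
    and f_d: "\<And>i. i \<in> I \<Longrightarrow> inner f (d i) \<le> - \<kappa>"
    and distinct: "inj_on (\<lambda>i. breakpoint f g (d i)) I"
    and "0 < \<epsilon>"
  shows "\<exists>t\<in>T. inner g x + (\<Sum>i\<in>I. inner g (d i)) - norm g * r - \<epsilon> \<le> inner g t"
proof -
  define G where "G = (\<Sum>i\<in>I. inner g (d i))"
  have "0 \<le> G" unfolding G_def using g_pos by (simp add: sum_nonneg less_imp_le)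
  have g_le_G: "inner g (d i) \<le> G" if "i \<in> I" for i
    unfolding G_def using \<open>finite I\<close> that g_pos by (intro member_le_sum) (auto intro: less_imp_le)
  have "dist x x \<le> r" using near[OF \<open>x \<in> T\<close>] \<open>0 < \<kappa>\<close> by simp
  then have "0 \<le> r" by simp
  have f_bdd: "inner (f + 0 *\<^sub>R g) t \<le> inner f x + norm f * r" if "t \<in> T" for t
  proof (cases "inner f x - \<kappa> < inner f t")
    case True
    then show ?thesis using inner_le_add_norm_mult_dist[OF near[OF that True]] by simp
  next
    case False
    moreover have "0 \<le> norm f * r" using \<open>0 \<le> r\<close> by simp
    ultimately show ?thesis using \<open>0 < \<kappa>\<close> by simp
  qed
  define \<delta> where "\<delta> = \<kappa> / (G + 1)"
  define \<gamma> where "\<gamma> = \<kappa> * min (1 / 2) (\<epsilon> / (2 * (G + 1)))"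
  have "0 < \<delta>" "0 < \<gamma>" "\<gamma> < \<kappa>"
    using \<open>0 < \<kappa>\<close> \<open>0 \<le> G\<close> \<open>0 < \<epsilon>\<close> by (auto simp: \<delta>_def \<gamma>_def add_nonneg_pos)
  have "\<gamma> / \<delta> = (G + 1) * min (1 / 2) (\<epsilon> / (2 * (G + 1)))"
    using \<open>0 < \<kappa>\<close> \<open>0 \<le> G\<close> by (simp add: \<delta>_def \<gamma>_def)
  also have "\<dots> \<le> (G + 1) * (\<epsilon> / (2 * (G + 1)))" using \<open>0 \<le> G\<close> by (intro mult_left_mono) auto
  also have "\<dots> = \<epsilon> / 2" using \<open>0 \<le> G\<close> by (simp add: field_simps)
  finally have "\<gamma> / \<delta> \<le> \<epsilon> / 2" .
  have "T \<noteq> {}" using \<open>x \<in> T\<close> by blast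
  then obtain t0 where t0: "almost_argmax (inner (f + 0 *\<^sub>R g)) \<gamma> T t0"
    using almost_argmax_exists[where h = "inner (f + 0 *\<^sub>R g)", OF f_bdd _ \<open>0 < \<gamma>\<close>] by blast
  then have "t0 \<in> T" "inner (f + 0 *\<^sub>R g) x \<le> inner (f + 0 *\<^sub>R g) t0 + \<gamma>"
    using \<open>x \<in> T\<close> unfolding almost_argmax_def by auto
  then have "inner f x - \<kappa> < inner f t0" using \<open>\<gamma> < \<kappa>\<close> by simp
  with near[OF \<open>t0 \<in> T\<close>] have "dist x t0 \<le> r" by (simp add: dist_commute)
  then have "inner g x \<le> inner g t0 + norm g * r" by (rule inner_le_add_norm_mult_dist)
  moreover have "\<exists>t\<in>T. inner g t0 + G - \<gamma> / \<delta> - \<epsilon> / 2 \<le> inner g t"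
    unfolding G_def
  proof (rule parametric_ascent[OF \<open>finite I\<close> moves _ g_bdd g_pos distinct order_refl \<open>0 < \<delta>\<close> _ _ t0])
    show "inner f t \<le> inner f x + norm f * r" if "t \<in> T" for t using f_bdd[OF that] by simp
    show "0 + \<delta> \<le> breakpoint f g (d i)" if "i \<in> I" for i
    proof -
      have "\<kappa> * inner g (d i) \<le> \<kappa> * (G + 1)" using g_le_G[OF that] \<open>0 < \<kappa>\<close> by simp
      also have "\<dots> \<le> - inner f (d i) * (G + 1)"
        using f_d[OF that] \<open>0 \<le> G\<close> by (intro mult_right_mono) auto
      finally show ?thesis using g_pos[OF that] \<open>0 \<le> G\<close>
        by (simp add: \<delta>_def breakpoint_def field_simps)
    qed
    show "\<gamma> < - inner (f + 0 *\<^sub>R g) (d i)" if "i \<in> I" for i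
      using f_d[OF that] \<open>\<gamma> < \<kappa>\<close> by simp
    show "0 < \<epsilon> / 2" using \<open>0 < \<epsilon>\<close> by simp
  qed
  then obtain t where "t \<in> T" "inner g t0 + G - \<gamma> / \<delta> - \<epsilon> / 2 \<le> inner g t" by blast
  ultimately show ?thesis using \<open>\<gamma> / \<delta> \<le> \<epsilon> / 2\<close> unfolding G_def by (intro bexI[of _ t]) auto
qed

lemma extreme_point_ascent:
  fixes T :: "'a::euclidean_space set" and d :: "'i \<Rightarrow> 'a"
  assumes ext: "x extreme_point_of closure (convex hull T)" and "x \<in> T"
    and "finite I"
    and dirs: "\<And>i. i \<in> I \<Longrightarrow> x + d i \<in> T"
    and moves: "\<And>t i. t \<in> T \<Longrightarrow> i \<in> I \<Longrightarrow> t + d i \<in> T \<or> t - d i \<in> T"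
    and nonpar: "\<And>i j. i \<in> I \<Longrightarrow> j \<in> I \<Longrightarrow> i \<noteq> j \<Longrightarrow> \<not> parallel (d i) (d j)"
    and g_pos: "\<And>i. i \<in> I \<Longrightarrow> 0 < inner g (d i)"
    and g_bdd: "\<And>t. t \<in> T \<Longrightarrow> inner g t \<le> B"
    and "0 < \<epsilon>"
  shows "\<exists>t\<in>T. inner g x + (\<Sum>i\<in>I. inner g (d i)) - \<epsilon> \<le> inner g t"
proof -
  have "0 < \<epsilon> / (2 * (norm g + 1))" using \<open>0 < \<epsilon>\<close> by (simp add: add_nonneg_pos)
  moreover have "0 < norm (d i)" if "i \<in> I" for i using g_pos[OF that] by auto
  ultimately obtain r where "0 < r" and r_small: "r < \<epsilon> / (2 * (norm g + 1))"
    and r_far: "\<forall>i\<in>I. r < norm (d i)"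
    using finite_pos_lower_bound[OF \<open>finite I\<close>, of "\<lambda>i. norm (d i)"] by blast
  have "norm g * r \<le> \<epsilon> / 2"
  proof -
    have "0 < 2 * (norm g + 1)" by (simp add: add_nonneg_pos)
    then have "r * (2 * (norm g + 1)) < \<epsilon>" using r_small pos_less_divide_eq by blast
    then show ?thesis using \<open>0 < r\<close> by (simp add: algebra_simps)
  qed
  have r_le: "r \<le> norm (d i)" if "i \<in> I" for i using r_far that by (simp add: less_imp_le)
  obtain f \<kappa> where "0 < \<kappa>" and near: "\<forall>t\<in>T. inner f x - \<kappa> < inner f t \<longrightarrow> dist t x < r"
    and f_d: "\<forall>i\<in>I. inner f (d i) \<le> - \<kappa>" and distinct: "inj_on (\<lambda>i. breakpoint f g (d i)) I"
    using extreme_point_tilted_functional[where d = d, OF ext \<open>finite I\<close> \<open>0 < r\<close> dirs r_le nonpar g_pos]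
    by blast
  have near': "dist t x \<le> r" if "t \<in> T" "inner f x - \<kappa> < inner f t" for t
    using near that by (meson less_imp_le)
  have f_d': "inner f (d i) \<le> - \<kappa>" if "i \<in> I" for i using f_d that by blast
  have "0 < \<epsilon> / 2" using \<open>0 < \<epsilon>\<close> by simp
  then obtain t where "t \<in> T" "inner g x + (\<Sum>i\<in>I. inner g (d i)) - norm g * r - \<epsilon> / 2 \<le> inner g t"
    using slicing_functional_ascent[OF \<open>x \<in> T\<close> \<open>finite I\<close> moves g_pos g_bdd \<open>0 < \<kappa>\<close> near' f_d' distinct]
    by blast
  with \<open>norm g * r \<le> \<epsilon> / 2\<close> show ?thesis by (intro bexI[of _ t]) auto
qed

lemma extreme_point_plus_sum_in_closure_convex_hull:
  fixes T :: "'a::euclidean_space set" and d :: "'i \<Rightarrow> 'a"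
  assumes ext: "x extreme_point_of closure (convex hull T)" and "x \<in> T"
    and "finite I"
    and dirs: "\<And>i. i \<in> I \<Longrightarrow> x + d i \<in> T"
    and moves: "\<And>t i. t \<in> T \<Longrightarrow> i \<in> I \<Longrightarrow> t + d i \<in> T \<or> t - d i \<in> T"
    and nonpar: "\<And>i j. i \<in> I \<Longrightarrow> j \<in> I \<Longrightarrow> i \<noteq> j \<Longrightarrow> \<not> parallel (d i) (d j)"
  shows "x + (\<Sum>i\<in>I. d i) \<in> closure (convex hull T)"
proof (rule ccontr)
  define p where "p = x + (\<Sum>i\<in>I. d i)"
  assume "p \<notin> closure (convex hull T)"
  then obtain a b where "inner a p < b" and sep: "\<forall>y\<in>closure (convex hull T). b < inner a y"
    using separating_hyperplane_closed_point[of "closure (convex hull T)" p] by (auto simp: convex_closure)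
  define g where "g = - a"
  have g_T: "inner g t < - b" if "t \<in> T" for t
    using sep that closure_subset hull_subset[of T convex] by (force simp: g_def)
  define J where "J = {i \<in> I. 0 < inner g (d i)}"
  have "finite J" using \<open>finite I\<close> by (simp add: J_def)
  have "inner g p \<le> inner g x + (\<Sum>i\<in>J. inner g (d i))"
  proof -
    have "(\<Sum>i\<in>I. inner g (d i)) = (\<Sum>i\<in>J. inner g (d i)) + (\<Sum>i\<in>I - J. inner g (d i))"
      using sum.subset_diff[of J I] \<open>finite I\<close> by (simp add: J_def add.commute)
    moreover have "(\<Sum>i\<in>I - J. inner g (d i)) \<le> 0" by (intro sum_nonpos) (auto simp: J_def)
    ultimately show ?thesis by (simp add: p_def inner_add_right inner_sum_right)
  qed
  moreover have "0 < inner g p + b" using \<open>inner a p < b\<close> by (simp add: g_def)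
  then have "\<exists>t\<in>T. inner g x + (\<Sum>i\<in>J. inner g (d i)) - (inner g p + b) \<le> inner g t"
    by (intro extreme_point_ascent[OF ext \<open>x \<in> T\<close> \<open>finite J\<close>, where B = "- b"])
      (use dirs moves nonpar g_T in \<open>auto simp: J_def less_imp_le\<close>)
  then obtain t where "t \<in> T" "inner g x + (\<Sum>i\<in>J. inner g (d i)) - (inner g p + b) \<le> inner g t"
    by blast
  ultimately show False using g_T[OF \<open>t \<in> T\<close>] by linarith
qed

lemma V_closed_signed_sum_in_closure_convex_hull:
  fixes V T :: "'a::euclidean_space set"
  assumes "finite V" "\<forall>u\<in>V. \<forall>v\<in>V. u \<noteq> v \<longrightarrow> \<not> parallel u v" "V_closed V T"
    and "x extreme_point_of closure (convex hull T)" "x \<in> T" "I \<subseteq> V"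
  shows "x + (\<Sum>v\<in>I. if x + v \<in> T then v else - v) \<in> closure (convex hull T)"
proof (rule extreme_point_plus_sum_in_closure_convex_hull[OF assms(4,5)])
  show "finite I" using assms(1,6) by (rule finite_subset[rotated])
  show "x + (if x + v \<in> T then v else - v) \<in> T" if "v \<in> I" for v
    using assms(3,5,6) that unfolding V_closed_def by auto
  show "t + (if x + v \<in> T then v else - v) \<in> T \<or> t - (if x + v \<in> T then v else - v) \<in> T"
    if "t \<in> T" "v \<in> I" for t v
    using assms(3,6) that unfolding V_closed_def by auto
  show "\<not> parallel (if x + u \<in> T then u else - u) (if x + v \<in> T then v else - v)"
    if "u \<in> I" "v \<in> I" "u \<noteq> v" for u v
    using assms(2,6) that by auto
qed

theorem theorem1p3:
  fixes V T :: "(real ^ 'n) set" and x :: "real ^ 'n"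
  assumes "CARD('n) \<ge> 2"
    and "finite V"
    and "\<forall>u\<in>V. \<forall>v\<in>V. u \<noteq> v \<longrightarrow> \<not> parallel u v"
    and "closed T"
    and "V_closed V T"
    and "x extreme_point_of (closure (convex hull T))"
  shows "\<exists>t::real ^ 'n. x \<in> (\<lambda>p. t + p) ` subset_sums V
           \<and> (\<lambda>p. t + p) ` subset_sums V \<subseteq> closure (convex hull T)"
proof -
  have "x \<in> T" using extreme_point_closure_convex_hull_mem[OF assms(4,6)] .
  define N where "N = {v \<in> V. x + v \<notin> T}"
  define t where "t = x - (\<Sum>v\<in>N. v)"
  have "t + (\<Sum>v\<in>W. v) \<in> closure (convex hull T)" if "W \<subseteq> V" for W
  proof -
    have "finite W" "finite N" using assms(2) that by (auto simp: N_def intro: finite_subset)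
    then have "t + (\<Sum>v\<in>W. v) = x + (\<Sum>v\<in>(W - N) \<union> (N - W). if v \<in> N then - v else v)"
      using sum_diff_sum_eq_sum_symdiff[of W N] by (simp add: t_def algebra_simps)
    also have "\<dots> = x + (\<Sum>v\<in>(W - N) \<union> (N - W). if x + v \<in> T then v else - v)"
      using that by (intro arg_cong[where f = "(+) x"] sum.cong) (auto simp: N_def)
    also have "\<dots> \<in> closure (convex hull T)"
      using that by (intro V_closed_signed_sum_in_closure_convex_hull[OF assms(2,3,5,6) \<open>x \<in> T\<close>])
        (auto simp: N_def)
    finally show ?thesis .
  qed
  moreover have "x = t + (\<Sum>v\<in>N. v)" "N \<subseteq> V" by (auto simp: t_def N_def)
  ultimately show ?thesis unfolding subset_sums_def by blast
qed

end
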